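(* Let $m\ge1$ and $1\le t\le 2^{m-1}$ be integers and $p=t/2^m$. Let $f:\{0,1\}^n\to\{0,1\}$ and let $g=\mathrm{Red}(f):\{0,1\}^{mn}\to\{0,1\}$ be defined below. Then \[ \sum_{i=1}^{mn}I_i(g)^2\le 12p^2\lfloor\log(1/p)\rfloor\sum_{i=1}^nI_i(f)^2, \] where the influences on $f$ are w.r.t. $\mu_p$ and those on $g$ are w.r.t. the uniform measure $\mu_{1/2}$.
   Context: For $0<p<1$, $\mu_p$ is the product measure on $\{0,1\}^n$ with $\mu_p(x)=p^{\sum_i x_i}(1-p)^{n-\sum_i x_i}$. For a function $f$ on $\{0,1\}^n$ and $1\le i\le n$, the influence of coordinate $i$ w.r.t. $\mu_p$ is $I_i(f)=\Pr_{x\sim\mu_p}[f(x)\ne f(x\oplus e_i)]$, where $x\oplus e_i$ is $x$ with its $i$-th coordinate flipped. Reduction: write $y\in\{0,1\}^{mn}$ as $(y^1,\dots,y^n)$, $y^i=(y^i_1,\dots,y^i_m)\in\{0,1\}^m$, where $y^i_j$ is coordinate $(i-1)m+j$ of $y$. Let $\mathrm{Bin}(y^i)=\sum_{j=0}^{m-1}2^jy^i_{m-j}$, $h(y^i)=1$ if $\mathrm{Bin}(y^i)\ge 2^m-t$ and $0$ otherwise, and $g(y)=f(h(y^1),\dots,h(y^n))$. $\log$ is base 2. *)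

theory Defs
  imports "HOL-Analysis.Analysis"
begin

text \<open>Points of the cube {0,1}^n are represented as functions nat => bool that are
  False outside the (0-based) index range {0..<n}; coordinate i of the paper is index i-1.\<close>

definition cube :: "nat \<Rightarrow> (nat \<Rightarrow> bool) set" where
  "cube n = {x. \<forall>i. n \<le> i \<longrightarrow> \<not> x i}"

definition mu :: "real \<Rightarrow> nat \<Rightarrow> (nat \<Rightarrow> bool) \<Rightarrow> real" where
  "mu p n x = (\<Prod>i<n. if x i then p else 1 - p)"

definition flip :: "(nat \<Rightarrow> bool) \<Rightarrow> nat \<Rightarrow> (nat \<Rightarrow> bool)" where
  "flip x i = x(i := \<not> x i)"

definition influence :: "real \<Rightarrow> nat \<Rightarrow> ((nat \<Rightarrow> bool) \<Rightarrow> bool) \<Rightarrow> nat \<Rightarrow> real" where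
  "influence p n f i = (\<Sum>x\<in>cube n. if f x \<noteq> f (flip x i) then mu p n x else 0)"

text \<open>Bin(y^i) for the (0-based) i-th block of length m:
  Bin(y^i) = sum_{j=0}^{m-1} 2^j y^i_{m-j}, where y^i_k (1-based k) is 0-based coordinate i*m + k - 1.\<close>
definition blockBin :: "nat \<Rightarrow> (nat \<Rightarrow> bool) \<Rightarrow> nat \<Rightarrow> nat" where
  "blockBin m y i = (\<Sum>j<m. 2 ^ j * (if y (i * m + (m - 1 - j)) then 1 else 0))"

definition hred :: "nat \<Rightarrow> nat \<Rightarrow> (nat \<Rightarrow> bool) \<Rightarrow> nat \<Rightarrow> bool" where
  "hred m t y i = (blockBin m y i \<ge> 2 ^ m - t)"

definition Red :: "nat \<Rightarrow> nat \<Rightarrow> nat \<Rightarrow> ((nat \<Rightarrow> bool) \<Rightarrow> bool) \<Rightarrow> (nat \<Rightarrow> bool) \<Rightarrow> bool" where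
  "Red m t n f y = f (\<lambda>i. i < n \<and> hred m t y i)"

end

theory Submission
  imports Defs
begin

text \<open>
  Split \<open>y\<close> into \<open>n\<close> blocks of \<open>m\<close> bits. Under the uniform measure the values
  \<open>h(y\<^sup>1), ..., h(y\<^sup>n)\<close> are independent and \<open>p\<close>-biased, and flipping bit \<open>r\<close> of block \<open>i\<close>
  changes \<open>g\<close> exactly when it changes \<open>h\<close> on that block and coordinate \<open>i\<close> is pivotal
  for \<open>f\<close>. Hence the influence of that bit on \<open>g\<close> is \<open>I_r(h) * I_i(f)\<close>, and the left-hand
  side factors as \<open>(\<Sum>_r I_r(h)\<^sup>2) * (\<Sum>_i I_i(f)\<^sup>2)\<close>.

  Bit \<open>r\<close> has weight \<open>2^(m-1-r)\<close> in \<open>Bin\<close>, so the points where flipping it crosses the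
  threshold \<open>2^m - t\<close> from above lie in a window of \<open>min(t, 2^(m-1-r))\<close> values, and
  \<open>I_r(h) \<le> 2 min(t, 2^(m-1-r)) / 2^m\<close>. Choosing \<open>k\<close> with \<open>2^(k-1) < t \<le> 2^k\<close>, the squares of
  the terms with \<open>m-1-r < k\<close> form a geometric sum below \<open>4t\<^sup>2/3\<close>, and each of the remaining
  \<open>m - k \<le> \<lfloor>log(1/p)\<rfloor>\<close> terms is at most \<open>t\<^sup>2\<close>; this gives the factor \<open>12 p\<^sup>2 \<lfloor>log(1/p)\<rfloor>\<close>.
\<close>

section \<open>Influences on the cube\<close>

lemma cube_eq_image_Pow: "cube n = (\<lambda>S i. i \<in> S) ` Pow {..<n}"
proof (intro equalityI subsetI)
  fix x assume "x \<in> cube n"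
  then have "x = (\<lambda>i. i \<in> {i. x i})" "{i. x i} \<in> Pow {..<n}"
    by (auto simp: cube_def not_le[symmetric])
  then show "x \<in> (\<lambda>S i. i \<in> S) ` Pow {..<n}" by blast
qed (auto simp: cube_def)

lemma finite_cube [simp]: "finite (cube n)"
  by (simp add: cube_eq_image_Pow)

lemma card_cube: "card (cube n) = 2 ^ n"
proof -
  have "inj_on (\<lambda>S i. i \<in> S) (Pow {..<n})"
    by (auto simp: inj_on_def fun_eq_iff)
  then show ?thesis by (simp add: cube_eq_image_Pow card_image card_Pow)
qed

lemma flip_in_cube: "x \<in> cube n \<Longrightarrow> i < n \<Longrightarrow> flip x i \<in> cube n"
  by (auto simp: cube_def flip_def)

lemma flip_apply_same [simp]: "flip x i i = (\<not> x i)"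
  by (simp add: flip_def)

lemma flip_flip [simp]: "flip (flip x i) i = x"
  by (auto simp: flip_def)

lemma mu_half: "mu (1/2) n x = 1 / 2 ^ n"
proof -
  have "mu (1/2) n x = (\<Prod>i<n. 1/2)"
    unfolding mu_def by (rule prod.cong) auto
  then show ?thesis
    by (simp add: power_one_over)
qed

lemma influence_half:
  "influence (1/2) n f i = card {x \<in> cube n. f x \<noteq> f (flip x i)} / 2 ^ n"
  unfolding influence_def mu_half by (simp add: sum.If_cases Int_def)

lemma card_switch_eq_twice:
  fixes b :: bool
  assumes "i < n"
  shows "card {x \<in> cube n. f x \<noteq> f (flip x i)} = 2 * card {x \<in> cube n. f x = b \<and> f (flip x i) \<noteq> b}"
proof -
  let ?A = "\<lambda>b. {x \<in> cube n. f x = b \<and> f (flip x i) \<noteq> b}"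
  have "bij_betw (\<lambda>x. flip x i) (?A b) (?A (\<not> b))"
    by (rule bij_betw_byWitness[where f' = "\<lambda>x. flip x i"]) (auto simp: flip_in_cube assms)
  then have "card (?A (\<not> b)) = card (?A b)"
    by (simp add: bij_betw_same_card)
  moreover have "{x \<in> cube n. f x \<noteq> f (flip x i)} = ?A b \<union> ?A (\<not> b)" "?A b \<inter> ?A (\<not> b) = {}"
    by auto
  ultimately show ?thesis
    by (simp add: card_Un_disjoint)
qed

definition pivotal :: "((nat \<Rightarrow> bool) \<Rightarrow> bool) \<Rightarrow> nat \<Rightarrow> (nat \<Rightarrow> bool) \<Rightarrow> bool" where
  "pivotal f i x \<longleftrightarrow> f (x(i := False)) \<noteq> f (x(i := True))"

lemma pivotal_upd [simp]: "pivotal f i (x(i := b)) = pivotal f i x"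
  by (simp add: pivotal_def)

lemma upd_changes_iff_pivotal: "f x \<noteq> f (x(i := b)) \<longleftrightarrow> x i \<noteq> b \<and> pivotal f i x"
  by (cases "x i"; cases b) (auto simp: pivotal_def fun_upd_idem)

lemma sum_cube_coordinate:
  fixes F :: "(nat \<Rightarrow> bool) \<Rightarrow> real" and \<psi> :: "bool \<Rightarrow> real"
  assumes "i < n" and F: "\<And>x b. F (x(i := b)) = F x"
  shows "(\<Sum>x\<in>cube n. F x * \<psi> (x i)) = (\<psi> True + \<psi> False) / 2 * (\<Sum>x\<in>cube n. F x)"
proof -
  have "F (flip x i) = F x" for x
    unfolding flip_def by (rule F)
  then have "(\<Sum>x\<in>cube n. F x * \<psi> (x i)) = (\<Sum>x\<in>cube n. F x * \<psi> (\<not> x i))"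
    by (intro sum.reindex_bij_witness[where i = "\<lambda>x. flip x i" and j = "\<lambda>x. flip x i"])
      (auto simp: flip_in_cube assms(1))
  then have "2 * (\<Sum>x\<in>cube n. F x * \<psi> (x i)) = (\<Sum>x\<in>cube n. F x * (\<psi> (x i) + \<psi> (\<not> x i)))"
    by (simp add: sum.distrib algebra_simps)
  also have "\<dots> = (\<psi> True + \<psi> False) * (\<Sum>x\<in>cube n. F x)"
  proof -
    have "\<psi> b + \<psi> (\<not> b) = \<psi> True + \<psi> False" for b
      by (cases b) simp_all
    then show ?thesis
      by (simp add: sum_distrib_right mult.commute)
  qed
  finally show ?thesis
    by simp
qed

lemma influence_eq_sum_pivotal:
  assumes "i < n"
  shows "influence p n f i
    = 1/2 * (\<Sum>x\<in>cube n. of_bool (pivotal f i x) * (\<Prod>k\<in>{..<n} - {i}. if x k then p else 1 - p))"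
proof -
  let ?F = "\<lambda>x. of_bool (pivotal f i x) * (\<Prod>k\<in>{..<n} - {i}. if x k then p else 1 - p)"
  have "influence p n f i = (\<Sum>x\<in>cube n. ?F x * (if x i then p else 1 - p))"
    unfolding influence_def mu_def flip_def upd_changes_iff_pivotal
    using assms by (intro sum.cong refl) (simp add: prod.remove[of _ i])
  also have "\<dots> = (p + (1 - p)) / 2 * (\<Sum>x\<in>cube n. ?F x)"
    using assms by (subst sum_cube_coordinate[where \<psi> = "\<lambda>b. if b then p else 1 - p"])
      (auto intro!: prod.cong)
  finally show ?thesis
    by simp
qed

lemma PiE_fibre_cube:
  assumes "x \<in> cube n"
  shows "{Y \<in> PiE {..<n} (\<lambda>_. C). (\<lambda>i. i < n \<and> \<phi> (Y i)) = x} = PiE {..<n} (\<lambda>i. {z \<in> C. \<phi> z = x i})"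
proof (intro equalityI subsetI)
  fix Y assume "Y \<in> {Y \<in> PiE {..<n} (\<lambda>_. C). (\<lambda>i. i < n \<and> \<phi> (Y i)) = x}"
  then show "Y \<in> PiE {..<n} (\<lambda>i. {z \<in> C. \<phi> z = x i})"
    by (auto simp: PiE_iff fun_eq_iff)
next
  fix Y assume Y: "Y \<in> PiE {..<n} (\<lambda>i. {z \<in> C. \<phi> z = x i})"
  moreover have "(\<lambda>i. i < n \<and> \<phi> (Y i)) = x"
  proof
    fix k show "(k < n \<and> \<phi> (Y k)) = x k"
      using Y assms by (cases "k < n") (auto simp: PiE_iff cube_def)
  qed
  ultimately show "Y \<in> {Y \<in> PiE {..<n} (\<lambda>_. C). (\<lambda>i. i < n \<and> \<phi> (Y i)) = x}"
    by (auto simp: PiE_iff)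
qed

lemma sum_PiE_cube_fibres:
  fixes G :: "(nat \<Rightarrow> bool) \<Rightarrow> real" and w :: "nat \<Rightarrow> 'a \<Rightarrow> real"
  assumes "finite C"
  shows "(\<Sum>Y\<in>PiE {..<n} (\<lambda>_. C). G (\<lambda>i. i < n \<and> \<phi> (Y i)) * (\<Prod>i<n. w i (Y i)))
    = (\<Sum>x\<in>cube n. G x * (\<Prod>i<n. \<Sum>z\<in>{z \<in> C. \<phi> z = x i}. w i z))"
proof -
  let ?S = "PiE {..<n} (\<lambda>_. C)" and ?g = "\<lambda>Y i. i < n \<and> \<phi> (Y i)"
  have "finite ?S"
    using assms by (simp add: finite_PiE)
  moreover have "?g ` ?S \<subseteq> cube n"
    unfolding cube_def by (rule image_subsetI) simp
  ultimately have "(\<Sum>Y\<in>?S. G (?g Y) * (\<Prod>i<n. w i (Y i)))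
      = (\<Sum>x\<in>cube n. \<Sum>Y\<in>{Y \<in> ?S. ?g Y = x}. G (?g Y) * (\<Prod>i<n. w i (Y i)))"
    by (intro sum.group[symmetric] finite_cube)
  also have "\<dots> = (\<Sum>x\<in>cube n. G x * (\<Sum>Y\<in>PiE {..<n} (\<lambda>i. {z \<in> C. \<phi> z = x i}). \<Prod>i<n. w i (Y i)))"
  proof (rule sum.cong[OF refl])
    fix x assume x: "x \<in> cube n"
    have "(\<Sum>Y\<in>{Y \<in> ?S. ?g Y = x}. G (?g Y) * (\<Prod>i<n. w i (Y i)))
        = (\<Sum>Y\<in>{Y \<in> ?S. ?g Y = x}. G x * (\<Prod>i<n. w i (Y i)))"
      by (rule sum.cong) auto
    then show "(\<Sum>Y\<in>{Y \<in> ?S. ?g Y = x}. G (?g Y) * (\<Prod>i<n. w i (Y i)))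
        = G x * (\<Sum>Y\<in>PiE {..<n} (\<lambda>i. {z \<in> C. \<phi> z = x i}). \<Prod>i<n. w i (Y i))"
      using x by (simp add: sum_distrib_left PiE_fibre_cube)
  qed
  also have "\<dots> = (\<Sum>x\<in>cube n. G x * (\<Prod>i<n. \<Sum>z\<in>{z \<in> C. \<phi> z = x i}. w i z))"
    using assms by (simp add: prod_sum_PiE)
  finally show ?thesis .
qed

section \<open>Blockwise composition\<close>

definition block :: "nat \<Rightarrow> (nat \<Rightarrow> bool) \<Rightarrow> nat \<Rightarrow> nat \<Rightarrow> bool" where
  "block m y i = (\<lambda>r. r < m \<and> y (i * m + r))"

definition join_blocks :: "nat \<Rightarrow> nat \<Rightarrow> (nat \<Rightarrow> nat \<Rightarrow> bool) \<Rightarrow> nat \<Rightarrow> bool" where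
  "join_blocks m n Y = (\<lambda>k. k < m * n \<and> Y (k div m) (k mod m))"

definition blockwise :: "nat \<Rightarrow> nat \<Rightarrow> ((nat \<Rightarrow> bool) \<Rightarrow> bool) \<Rightarrow> ((nat \<Rightarrow> bool) \<Rightarrow> bool)
    \<Rightarrow> (nat \<Rightarrow> bool) \<Rightarrow> bool" where
  "blockwise m n f h y = f (\<lambda>i. i < n \<and> h (block m y i))"

lemma block_index_less:
  fixes i r m n :: nat
  assumes "i < n" and "r < m"
  shows "i * m + r < m * n"
proof -
  have "i * m + r < (i + 1) * m"
    using assms(2) by simp
  also have "\<dots> \<le> n * m"
    using assms(1) by (intro mult_right_mono) simp_all
  finally show ?thesis
    by (simp add: mult.commute)
qed

lemma block_join_blocks:
  assumes "i < n" and "Y i \<in> cube m"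
  shows "block m (join_blocks m n Y) i = Y i"
proof
  fix r show "block m (join_blocks m n Y) i r = Y i r"
  proof (cases "r < m")
    case True
    then show ?thesis
      using block_index_less[OF assms(1) True] by (simp add: block_def join_blocks_def)
  next
    case False
    then show ?thesis
      using assms(2) by (simp add: block_def cube_def)
  qed
qed

lemma bij_betw_join_blocks:
  assumes "0 < m"
  shows "bij_betw (join_blocks m n) (PiE {..<n} (\<lambda>_. cube m)) (cube (m * n))"
proof (rule bij_betw_byWitness[where f' = "\<lambda>y. \<lambda>i\<in>{..<n}. block m y i"])
  show "\<forall>Y\<in>PiE {..<n} (\<lambda>_. cube m). (\<lambda>i\<in>{..<n}. block m (join_blocks m n Y) i) = Y"
    by (auto simp: block_join_blocks PiE_iff extensional_def fun_eq_iff)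
  show "\<forall>y\<in>cube (m * n). join_blocks m n (\<lambda>i\<in>{..<n}. block m y i) = y"
  proof (intro ballI ext)
    fix y k assume y: "y \<in> cube (m * n)"
    show "join_blocks m n (\<lambda>i\<in>{..<n}. block m y i) k = y k"
    proof (cases "k < m * n")
      case True
      then have "k div m < n"
        by (simp add: less_mult_imp_div_less mult.commute)
      then show ?thesis
        using True assms by (simp add: join_blocks_def block_def)
    next
      case False
      then show ?thesis
        using y by (simp add: join_blocks_def cube_def)
    qed
  qed
  show "join_blocks m n ` PiE {..<n} (\<lambda>_. cube m) \<subseteq> cube (m * n)"
    by (auto simp: join_blocks_def cube_def)
  show "(\<lambda>y. \<lambda>i\<in>{..<n}. block m y i) ` cube (m * n) \<subseteq> PiE {..<n} (\<lambda>_. cube m)"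
    by (auto simp: block_def cube_def)
qed

lemma flip_join_blocks:
  assumes "i < n" and "r < m"
  shows "flip (join_blocks m n Y) (i * m + r) = join_blocks m n (Y(i := flip (Y i) r))"
proof
  fix k
  have "k = i * m + r \<longleftrightarrow> k div m = i \<and> k mod m = r"
  proof
    assume "k = i * m + r"
    then show "k div m = i \<and> k mod m = r"
      using assms(2) by simp
  next
    assume "k div m = i \<and> k mod m = r"
    then show "k = i * m + r"
      using div_mult_mod_eq[of k m] by simp
  qed
  then show "flip (join_blocks m n Y) (i * m + r) k = join_blocks m n (Y(i := flip (Y i) r)) k"
    using block_index_less[OF assms] by (auto simp: flip_def join_blocks_def)
qed

lemma sum_blocks:
  fixes m n :: nat
  shows "(\<Sum>j<m * n. F j) = (\<Sum>i<n. \<Sum>r<m. F (i * m + r))"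
proof -
  have "(\<Sum>j<m * n. F j) = (\<Sum>i<n. sum F {i * m..<i * m + m})"
    using sum.nat_group[where g = F and k = m and n = n] by (simp only: mult.commute[of m n])
  also have "\<dots> = (\<Sum>i<n. \<Sum>r<m. F (i * m + r))"
    by (simp add: sum.shift_bounds_nat_ivl[where m = 0, simplified] atLeast0LessThan add.commute)
  finally show ?thesis .
qed

lemma card_cube_level:
  assumes "p = card {z \<in> cube m. h z} / 2 ^ m"
  shows "real (card {z \<in> cube m. h z = b}) = 2 ^ m * (if b then p else 1 - p)"
proof (cases b)
  case False
  have "{z \<in> cube m. h z = b} = cube m - {z \<in> cube m. h z}"
    using False by auto
  then have "card {z \<in> cube m. h z = b} = 2 ^ m - card {z \<in> cube m. h z}"
    by (simp add: card_Diff_subset card_cube)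
  moreover have "card {z \<in> cube m. h z} \<le> 2 ^ m"
    using card_mono[of "cube m" "{z \<in> cube m. h z}"] by (simp add: card_cube)
  ultimately show ?thesis
    using False assms by (simp add: algebra_simps)
qed (use assms in simp)

lemma blockwise_join_blocks:
  assumes "Y \<in> PiE {..<n} (\<lambda>_. cube m)"
  shows "blockwise m n f h (join_blocks m n Y) = f (\<lambda>k. k < n \<and> h (Y k))"
  unfolding blockwise_def using assms
  by (intro arg_cong[where f = f] ext) (auto simp: block_join_blocks PiE_iff)

lemma blockwise_switch_iff:
  assumes "Y \<in> PiE {..<n} (\<lambda>_. cube m)" and "i < n" and "r < m"
  shows "blockwise m n f h (join_blocks m n Y) \<noteq> blockwise m n f h (flip (join_blocks m n Y) (i * m + r))
    \<longleftrightarrow> pivotal f i (\<lambda>k. k < n \<and> h (Y k)) \<and> h (Y i) \<noteq> h (flip (Y i) r)"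
proof -
  let ?H = "\<lambda>Y k. k < n \<and> h (Y k)"
  have "Y(i := flip (Y i) r) \<in> PiE {..<n} (\<lambda>_. cube m)"
    using assms by (auto simp: PiE_iff flip_in_cube extensional_def)
  then have "blockwise m n f h (flip (join_blocks m n Y) (i * m + r)) = f (?H (Y(i := flip (Y i) r)))"
    unfolding flip_join_blocks[OF assms(2,3)] by (rule blockwise_join_blocks)
  also have "?H (Y(i := flip (Y i) r)) = (?H Y)(i := h (flip (Y i) r))"
    using assms(2) by auto
  finally have "blockwise m n f h (flip (join_blocks m n Y) (i * m + r)) = f ((?H Y)(i := h (flip (Y i) r)))" .
  moreover have "?H Y i = h (Y i)"
    using assms(2) by simp
  ultimately show ?thesis
    using blockwise_join_blocks[OF assms(1)] upd_changes_iff_pivotal[of f "?H Y" i "h (flip (Y i) r)"]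
    by (simp only: conj_commute)
qed

lemma card_level_switch:
  assumes "r < m"
  shows "real (card {z \<in> cube m. h z = b \<and> h (flip z r) \<noteq> b}) = 2 ^ m / 2 * influence (1/2) m h r"
  using card_switch_eq_twice[OF assms, of h b] by (simp add: influence_half)

lemma influence_blockwise:
  assumes "i < n" and "r < m" and p: "p = card {z \<in> cube m. h z} / 2 ^ m"
  shows "influence (1/2) (m * n) (blockwise m n f h) (i * m + r)
    = influence (1/2) m h r * influence p n f i"
proof -
  let ?g = "blockwise m n f h" and ?j = "i * m + r" and ?Cube = "PiE {..<n} (\<lambda>_. cube m)"
  define w :: "nat \<Rightarrow> (nat \<Rightarrow> bool) \<Rightarrow> real"
    where "w k z = (if k = i then of_bool (h z \<noteq> h (flip z r)) else 1)" for k z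
  define weight where "weight x = (\<Prod>k\<in>{..<n} - {i}. if x k then p else 1 - p)" for x
  have switch: "of_bool (?g (join_blocks m n Y) \<noteq> ?g (flip (join_blocks m n Y) ?j))
      = of_bool (pivotal f i (\<lambda>k. k < n \<and> h (Y k))) * (\<Prod>k<n. w k (Y k))" if "Y \<in> ?Cube" for Y
    using assms(1) by (simp only: blockwise_switch_iff[OF that assms(1,2)] of_bool_conj)
      (simp add: w_def)
  have fibre_prod: "(\<Prod>k<n. \<Sum>z\<in>{z \<in> cube m. h z = x k}. w k z)
      = 2 ^ (m * n) / 2 * influence (1/2) m h r * weight x" for x
  proof -
    have "(\<Sum>z\<in>{z \<in> cube m. h z = x i}. w i z) = real (card {z \<in> cube m. h z = x i \<and> h (flip z r) \<noteq> x i})"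
      by (simp add: w_def Int_def) (auto intro!: arg_cong[where f = card])
    then have "(\<Sum>z\<in>{z \<in> cube m. h z = x i}. w i z) = 2 ^ m / 2 * influence (1/2) m h r"
      by (simp only: card_level_switch[OF assms(2)])
    moreover have "(\<Sum>z\<in>{z \<in> cube m. h z = x k}. w k z) = 2 ^ m * (if x k then p else 1 - p)"
      if "k \<in> {..<n} - {i}" for k
      using card_cube_level[OF p] that by (simp add: w_def)
    ultimately have "(\<Prod>k<n. \<Sum>z\<in>{z \<in> cube m. h z = x k}. w k z)
        = 2 ^ m * (2 ^ m) ^ (n - 1) / 2 * influence (1/2) m h r * weight x"
      using assms(1) by (simp add: prod.remove[of _ i] prod.distrib weight_def)
    moreover have "m * n = m + m * (n - 1)"
      using assms(1) by (cases n) simp_all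
    ultimately show ?thesis
      by (simp add: power_add power_mult)
  qed
  have "(\<Sum>y\<in>cube (m * n). of_bool (?g y \<noteq> ?g (flip y ?j)))
      = (\<Sum>Y\<in>?Cube. of_bool (?g (join_blocks m n Y) \<noteq> ?g (flip (join_blocks m n Y) ?j)) :: real)"
    using assms(2) by (intro sum.reindex_bij_betw[symmetric] bij_betw_join_blocks) simp
  then have "influence (1/2) (m * n) ?g ?j
      = (\<Sum>Y\<in>?Cube. of_bool (pivotal f i (\<lambda>k. k < n \<and> h (Y k))) * (\<Prod>k<n. w k (Y k))) / 2 ^ (m * n)"
    using switch by (simp add: influence_half Int_def)
  also have "\<dots> = (\<Sum>x\<in>cube n. of_bool (pivotal f i x) * (\<Prod>k<n. \<Sum>z\<in>{z \<in> cube m. h z = x k}. w k z))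
      / 2 ^ (m * n)"
    by (subst sum_PiE_cube_fibres) simp_all
  also have "\<dots> = 2 ^ (m * n) / 2 * influence (1/2) m h r
      * (\<Sum>x\<in>cube n. of_bool (pivotal f i x) * weight x) / 2 ^ (m * n)"
    unfolding fibre_prod sum_distrib_left by (intro arg_cong[where f = "\<lambda>s. s / _"] sum.cong) simp_all
  also have "\<dots> = influence (1/2) m h r * (1/2 * (\<Sum>x\<in>cube n. of_bool (pivotal f i x) * weight x))"
    by simp
  also have "\<dots> = influence (1/2) m h r * influence p n f i"
    using influence_eq_sum_pivotal[OF assms(1)] by (simp add: weight_def)
  finally show ?thesis .
qed

section \<open>The threshold function of one block\<close>

lemma blockBin_less: "blockBin m y i < 2 ^ m"
proof -
  have "blockBin m y i \<le> (\<Sum>j<m. 2 ^ j)"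
    unfolding blockBin_def by (intro sum_mono) auto
  also have "\<dots> < 2 ^ m"
    using sum_power2[of m] by (simp add: atLeast0LessThan)
  finally show ?thesis .
qed

lemma blockBin_of_bits:
  assumes "k < 2 ^ m"
  shows "blockBin m (\<lambda>r. r < m \<and> bit k (m - 1 - r)) 0 = k"
proof -
  have "blockBin m (\<lambda>r. r < m \<and> bit k (m - 1 - r)) 0 = (\<Sum>j<m. of_bool (bit k j) * 2 ^ j)"
    unfolding blockBin_def by (intro sum.cong) auto
  also have "\<dots> = take_bit m k"
    by (simp flip: horner_sum_bit_eq_take_bit add: horner_sum_eq_sum atLeast0LessThan)
  finally show ?thesis
    using assms by (simp add: take_bit_nat_eq_self_iff)
qed

lemma bij_betw_blockBin: "bij_betw (\<lambda>z. blockBin m z 0) (cube m) {..<2 ^ m}"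
proof -
  have image: "(\<lambda>z. blockBin m z 0) ` cube m = {..<2 ^ m}"
  proof (intro equalityI subsetI)
    fix k assume "k \<in> {..<(2::nat) ^ m}"
    define z where "z = (\<lambda>r. r < m \<and> bit k (m - 1 - r))"
    have "k = blockBin m z 0"
      unfolding z_def using \<open>k \<in> {..<2 ^ m}\<close> by (simp only: lessThan_iff blockBin_of_bits)
    moreover have "z \<in> cube m"
      by (simp add: z_def cube_def)
    ultimately show "k \<in> (\<lambda>z. blockBin m z 0) ` cube m" by (rule image_eqI)
  qed (auto simp: blockBin_less)
  then have "inj_on (\<lambda>z. blockBin m z 0) (cube m)"
    by (simp add: inj_on_iff_eq_card card_cube)
  with image show ?thesis by (simp add: bij_betw_def)
qed

lemma blockBin_flip:
  assumes "r < m"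
  shows "blockBin m (flip z r) 0 + of_bool (z r) * 2 ^ (m - 1 - r)
       = blockBin m z 0 + of_bool (\<not> z r) * 2 ^ (m - 1 - r)"
proof -
  let ?rest = "\<lambda>w. \<Sum>j\<in>{..<m} - {m - 1 - r}. (2::nat) ^ j * (if w (m - 1 - j) then 1 else 0)"
  have split: "blockBin m w 0 = ?rest w + of_bool (w r) * 2 ^ (m - 1 - r)" for w
    unfolding blockBin_def using assms by (subst sum.remove[of _ "m - 1 - r"]) auto
  have "?rest (flip z r) = ?rest z"
    using assms by (intro sum.cong) (auto simp: flip_def)
  then show ?thesis
    using split[of z] split[of "flip z r"] by (simp add: flip_def)
qed

lemma card_blockBin_Collect:
  "card {z \<in> cube m. P (blockBin m z 0)} = card {k. k < 2 ^ m \<and> P k}"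
proof -
  have "bij_betw (\<lambda>z. blockBin m z 0) {z \<in> cube m. P (blockBin m z 0)} {k. k < 2 ^ m \<and> P k}"
    using bij_betw_blockBin[of m] unfolding bij_betw_def inj_on_def by auto
  then show ?thesis by (rule bij_betw_same_card)
qed

lemma card_hred_block:
  assumes "t \<le> 2 ^ m"
  shows "card {z \<in> cube m. hred m t z 0} = t"
proof -
  have "{k. k < 2 ^ m \<and> 2 ^ m - t \<le> k} = {2 ^ m - t..<2 ^ m}" by auto
  then show ?thesis
    using assms card_blockBin_Collect[of m "\<lambda>k. 2 ^ m - t \<le> k"] by (simp add: hred_def)
qed

lemma card_hred_block_switch:
  assumes "r < m" and "t \<le> 2 ^ m"
  shows "card {z \<in> cube m. hred m t z 0 \<and> \<not> hred m t (flip z r) 0} \<le> min t (2 ^ (m - 1 - r))"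
proof -
  let ?S = "{z \<in> cube m. hred m t z 0 \<and> \<not> hred m t (flip z r) 0}"
  have "card ?S \<le> card {z \<in> cube m. hred m t z 0}"
    by (rule card_mono) auto
  then have "card ?S \<le> t"
    using card_hred_block[OF assms(2)] by simp
  \<comment> \<open>flipping bit \<open>r\<close> changes \<open>Bin\<close> by \<open>2^(m-1-r)\<close>, so a downward crossing of the
      threshold starts in this window\<close>
  let ?I = "{2 ^ m - t..<2 ^ m - t + 2 ^ (m - 1 - r)}"
  have "?S \<subseteq> {z \<in> cube m. blockBin m z 0 \<in> ?I}"
  proof
    fix z assume "z \<in> ?S"
    then have "2 ^ m - t \<le> blockBin m z 0" "blockBin m (flip z r) 0 < 2 ^ m - t" "z \<in> cube m"
      by (auto simp: hred_def)
    with blockBin_flip[OF assms(1), of z] show "z \<in> {z \<in> cube m. blockBin m z 0 \<in> ?I}"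
      by (cases "z r") auto
  qed
  then have "card ?S \<le> card {z \<in> cube m. blockBin m z 0 \<in> ?I}"
    by (intro card_mono) auto
  also have "\<dots> = card {k. k < 2 ^ m \<and> k \<in> ?I}"
    by (rule card_blockBin_Collect)
  also have "\<dots> \<le> card ?I"
    by (intro card_mono) auto
  finally show ?thesis
    using \<open>card ?S \<le> t\<close> by simp
qed

lemma influence_hred_block_le:
  assumes "r < m" and "t \<le> 2 ^ m"
  shows "influence (1/2) m (\<lambda>z. hred m t z 0) r \<le> 2 * real (min t (2 ^ (m - 1 - r))) / 2 ^ m"
proof -
  have "card {z \<in> cube m. hred m t z 0 \<noteq> hred m t (flip z r) 0}
      = 2 * card {z \<in> cube m. hred m t z 0 \<and> \<not> hred m t (flip z r) 0}"
    using card_switch_eq_twice[OF assms(1), of "\<lambda>z. hred m t z 0" True] by simp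
  also have "\<dots> \<le> 2 * min t (2 ^ (m - 1 - r))"
    using card_hred_block_switch[OF assms] by simp
  finally have "real (card {z \<in> cube m. hred m t z 0 \<noteq> hred m t (flip z r) 0})
      \<le> 2 * real (min t (2 ^ (m - 1 - r)))"
    by (simp only: of_nat_le_iff of_nat_mult of_nat_numeral)
  then show ?thesis
    unfolding influence_half by (intro divide_right_mono) auto
qed

lemma exists_power2_between:
  fixes t :: nat
  assumes "1 \<le> t"
  shows "\<exists>k. t \<le> 2 ^ k \<and> 2 ^ k < 2 * t"
proof -
  define k where "k = (LEAST k. t \<le> (2::nat) ^ k)"
  have "t \<le> 2 ^ k"
    unfolding k_def by (rule LeastI[of _ t]) (rule less_imp_le, rule less_exp)
  moreover have "2 ^ k < 2 * t"
  proof (cases k)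
    case (Suc j)
    then have "\<not> t \<le> 2 ^ j"
      using not_less_Least[of j "\<lambda>k. t \<le> 2 ^ k"] by (simp add: k_def)
    with Suc show ?thesis by simp
  qed (use assms in simp)
  ultimately show ?thesis by blast
qed

lemma sum_min_power2_squares_le:
  fixes t k m :: nat
  assumes "k \<le> m" and "2 ^ k \<le> 2 * t"
  shows "3 * (\<Sum>j<m. (min t (2 ^ j))\<^sup>2) \<le> (4 + 3 * (m - k)) * t\<^sup>2"
proof -
  have geometric: "3 * (\<Sum>j<k. (4::nat) ^ j) + 1 = 4 ^ k"
    by (induction k) auto
  have four: "(4::nat) ^ j = (2 ^ j)\<^sup>2" for j
    by (induction j) (auto simp: power2_eq_square)
  have "(\<Sum>j<k. (min t (2 ^ j))\<^sup>2) \<le> (\<Sum>j<k. 4 ^ j)"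
    unfolding four by (intro sum_mono power_mono) auto
  moreover have "(4::nat) ^ k \<le> (2 * t)\<^sup>2"
    unfolding four using assms(2) by (rule power_mono) simp
  ultimately have "3 * (\<Sum>j<k. (min t (2 ^ j))\<^sup>2) \<le> 4 * t\<^sup>2"
    using geometric by (simp add: power_mult_distrib)
  moreover have "(\<Sum>j\<in>{k..<m}. (min t (2 ^ j))\<^sup>2) \<le> (m - k) * t\<^sup>2"
    using sum_mono[of "{k..<m}" "\<lambda>j. (min t (2 ^ j))\<^sup>2" "\<lambda>_. t\<^sup>2"] by (simp add: power_mono)
  moreover have "(\<Sum>j<m. (min t (2 ^ j))\<^sup>2) = (\<Sum>j<k. (min t (2 ^ j))\<^sup>2) + (\<Sum>j\<in>{k..<m}. (min t (2 ^ j))\<^sup>2)"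
    using assms(1) by (metis atLeast0LessThan sum.atLeastLessThan_concat zero_le)
  ultimately show ?thesis
    by (simp add: algebra_simps)
qed

lemma floor_log_inverse_ge:
  assumes "1 \<le> t" and "t \<le> 2 ^ k" and "k \<le> m" and "p = real t / 2 ^ m"
  shows "real (m - k) \<le> real_of_int \<lfloor>log 2 (1 / p)\<rfloor>"
proof -
  have "log 2 (1 / p) = real m - log 2 (real t)"
    using assms(1,4) by (simp add: log_divide log_nat_power)
  moreover have "log 2 (real t) \<le> log 2 (2 ^ k)"
    using assms(1,2) by (subst log_le_cancel_iff) simp_all
  ultimately have "real (m - k) \<le> log 2 (1 / p)"
    using assms(3) by simp
  then have "int (m - k) \<le> \<lfloor>log 2 (1 / p)\<rfloor>"
    by (simp add: le_floor_iff)
  then show ?thesis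
    by linarith
qed

lemma sum_influence_hred_block_squares_le_sum_min:
  assumes "t \<le> 2 ^ m"
  shows "(\<Sum>r<m. (influence (1/2) m (\<lambda>z. hred m t z 0) r)\<^sup>2)
    \<le> 4 / (2 ^ m)\<^sup>2 * (\<Sum>j<m. real ((min t (2 ^ j))\<^sup>2))"
proof -
  have "(\<Sum>r<m. (influence (1/2) m (\<lambda>z. hred m t z 0) r)\<^sup>2)
      \<le> (\<Sum>r<m. (2 * real (min t (2 ^ (m - 1 - r))) / 2 ^ m)\<^sup>2)"
    using influence_hred_block_le[OF _ assms]
    by (intro sum_mono power_mono) (simp_all add: influence_half)
  also have "\<dots> = 4 / (2 ^ m)\<^sup>2 * (\<Sum>r<m. real ((min t (2 ^ (m - Suc r)))\<^sup>2))"
    by (simp add: sum_distrib_left power_divide power_mult_distrib)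
  also have "(\<Sum>r<m. real ((min t (2 ^ (m - Suc r)))\<^sup>2)) = (\<Sum>j<m. real ((min t (2 ^ j))\<^sup>2))"
    by (rule sum.nat_diff_reindex)
  finally show ?thesis .
qed

lemma sum_influence_hred_block_squares_le:
  assumes "m \<ge> 1" and "1 \<le> t" and "t \<le> 2 ^ (m - 1)" and "p = real t / 2 ^ m"
  shows "(\<Sum>r<m. (influence (1/2) m (\<lambda>z. hred m t z 0) r)\<^sup>2)
    \<le> 12 * p\<^sup>2 * real_of_int \<lfloor>log 2 (1 / p)\<rfloor>"
proof -
  define L where "L = real_of_int \<lfloor>log 2 (1 / p)\<rfloor>"
  obtain k where k: "t \<le> 2 ^ k" "2 ^ k < 2 * t"
    using exists_power2_between[OF assms(2)] by blast
  have "2 * t \<le> 2 ^ m"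
    using assms(1,3) by (cases m) auto
  with k have "k < m"
    using power_less_imp_less_exp[of "2::nat" k m] by linarith
  have "real (m - k) \<le> L"
    unfolding L_def using floor_log_inverse_ge[OF assms(2) k(1) _ assms(4)] \<open>k < m\<close> by simp
  then have "4 + 3 * real (m - k) \<le> 9 * L"
    using \<open>k < m\<close> by linarith
  have "(\<Sum>r<m. (influence (1/2) m (\<lambda>z. hred m t z 0) r)\<^sup>2)
      \<le> 4 / (2 ^ m)\<^sup>2 * (\<Sum>j<m. real ((min t (2 ^ j))\<^sup>2))"
    using \<open>2 * t \<le> 2 ^ m\<close> by (intro sum_influence_hred_block_squares_le_sum_min) linarith
  also have "(\<Sum>j<m. real ((min t (2 ^ j))\<^sup>2)) \<le> (4 + 3 * real (m - k)) * (real t)\<^sup>2 / 3"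
  proof -
    have "real (3 * (\<Sum>j<m. (min t (2 ^ j))\<^sup>2)) \<le> real ((4 + 3 * (m - k)) * t\<^sup>2)"
      using sum_min_power2_squares_le[of k m t] \<open>k < m\<close> k(2) by (simp only: of_nat_le_iff)
    then show ?thesis
      by simp
  qed
  also have "(4 + 3 * real (m - k)) * (real t)\<^sup>2 \<le> (9 * L) * (real t)\<^sup>2"
    using \<open>4 + 3 * real (m - k) \<le> 9 * L\<close> by (rule mult_right_mono) simp
  finally show ?thesis
    unfolding L_def assms(4) by (simp add: field_simps)
qed

lemma blockBin_block: "blockBin m (block m y i) 0 = blockBin m y i"
  unfolding blockBin_def block_def by (intro sum.cong) auto

lemma Red_eq_blockwise: "Red m t n f = blockwise m n f (\<lambda>z. hred m t z 0)"
  by (simp add: fun_eq_iff Red_def blockwise_def hred_def blockBin_block)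

theorem proposition2p6:
  fixes m t n :: nat and p :: real and f :: "(nat \<Rightarrow> bool) \<Rightarrow> bool"
  assumes "m \<ge> 1" and "1 \<le> t" and "t \<le> 2 ^ (m - 1)"
    and "p = real t / 2 ^ m"
  shows "(\<Sum>i<m * n. (influence (1/2) (m * n) (Red m t n f) i)\<^sup>2)
           \<le> 12 * p\<^sup>2 * real_of_int \<lfloor>log 2 (1 / p)\<rfloor> * (\<Sum>i<n. (influence p n f i)\<^sup>2)"
proof -
  let ?h = "\<lambda>z. hred m t z 0"
  have "t \<le> 2 ^ m"
    using assms(3) by (meson diff_le_self one_le_numeral order_trans power_increasing)
  then have p: "p = card {z \<in> cube m. ?h z} / 2 ^ m"
    using assms(4) by (simp add: card_hred_block)
  have "(\<Sum>i<m * n. (influence (1/2) (m * n) (Red m t n f) i)\<^sup>2)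
      = (\<Sum>i<n. \<Sum>r<m. (influence (1/2) m ?h r * influence p n f i)\<^sup>2)"
    by (simp add: sum_blocks Red_eq_blockwise influence_blockwise[OF _ _ p])
  also have "\<dots> = (\<Sum>r<m. (influence (1/2) m ?h r)\<^sup>2) * (\<Sum>i<n. (influence p n f i)\<^sup>2)"
    by (simp add: power_mult_distrib sum_product sum.swap[of _ "{..<n}"])
  also have "\<dots> \<le> 12 * p\<^sup>2 * real_of_int \<lfloor>log 2 (1 / p)\<rfloor> * (\<Sum>i<n. (influence p n f i)\<^sup>2)"
    by (rule mult_right_mono[OF sum_influence_hred_block_squares_le[OF assms]]) (simp add: sum_nonneg)
  finally show ?thesis .
qed

end
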